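(* Let $M_1,M_2$ be matroids on a common ground set $E$, $\psi\colon E\to\Gamma$ a labeling to an abelian group, and $w\colon E\to\mathbb{R}$ a weight function. Let $B_0$ be a minimum-weight common basis of $M_1,M_2$ with $\psi(B_0)=0$, and let $C$ be a directed cycle of $D_{M_1,M_2}(B_0)$ with $\psi'(C)\neq 0$ that minimizes $w'(C)$ among all such directed cycles. Then $w(B_0\triangle V(C))\le w(B^* )$ for every common basis $B^*$ of $M_1,M_2$ with $\psi(B^* )\ne0$.
   Context: $\psi(S):=\sum_{x\in S}\psi(x)$, $w(S):=\sum_{x\in S}w(x)$. For a common basis $B$, the digraph $D_{M_1,M_2}(B)$ has vertex set $E$ and arcs: for each $x\in B$, $y\in E\setminus B$ with $B-x+y$ a basis of $M_1$, an arc $xy$ with label $\psi'(xy):=\psi(y)$ and weight $w'(xy):=w(y)$; for each $x\in B$, $y\in E\setminus B$ with $B-x+y$ a basis of $M_2$, an arc $yx$ with label $\psi'(yx):=-\psi(x)$ and weight $w'(yx):=-w(x)$. Labels and weights of directed cycles are the sums over their arcs. *)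

theory Defs
  imports Complex_Main
begin

definition matroid :: "'a set \<Rightarrow> ('a set \<Rightarrow> bool) \<Rightarrow> bool" where
  "matroid E indep \<longleftrightarrow>
     finite E \<and> indep {} \<and>
     (\<forall>X. indep X \<longrightarrow> X \<subseteq> E) \<and>
     (\<forall>X Y. indep X \<and> Y \<subseteq> X \<longrightarrow> indep Y) \<and>
     (\<forall>X Y. indep X \<and> indep Y \<and> card X < card Y \<longrightarrow>
        (\<exists>y\<in>Y - X. indep (insert y X)))"

definition basis :: "('a set \<Rightarrow> bool) \<Rightarrow> 'a set \<Rightarrow> bool" where
  "basis indep X \<longleftrightarrow> indep X \<and> (\<forall>Y. indep Y \<and> X \<subseteq> Y \<longrightarrow> Y = X)"

definition common_basis :: "('a set \<Rightarrow> bool) \<Rightarrow> ('a set \<Rightarrow> bool) \<Rightarrow> 'a set \<Rightarrow> bool" where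
  "common_basis I1 I2 B \<longleftrightarrow> basis I1 B \<and> basis I2 B"

definition exch_arc :: "'a set \<Rightarrow> ('a set \<Rightarrow> bool) \<Rightarrow> ('a set \<Rightarrow> bool) \<Rightarrow> 'a set
                        \<Rightarrow> 'a \<Rightarrow> 'a \<Rightarrow> bool" where
  "exch_arc E I1 I2 B u v \<longleftrightarrow>
     (u \<in> B \<and> v \<in> E - B \<and> basis I1 (insert v (B - {u}))) \<or>
     (u \<in> E - B \<and> v \<in> B \<and> basis I2 (insert u (B - {v})))"

text \<open>Label psi' / weight w' of an arc u v: the value f(v) if v is the head outside B
  (arc of the first kind), and -f(v) if the head v lies in B (arc of the second kind).\<close>
definition arc_val :: "'a set \<Rightarrow> ('a \<Rightarrow> 'g::ab_group_add) \<Rightarrow> 'a \<Rightarrow> 'a \<Rightarrow> 'g" where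
  "arc_val B f u v = (if v \<in> B then - f v else f v)"

definition dicycle :: "'a set \<Rightarrow> ('a set \<Rightarrow> bool) \<Rightarrow> ('a set \<Rightarrow> bool) \<Rightarrow> 'a set
                       \<Rightarrow> 'a list \<Rightarrow> bool" where
  "dicycle E I1 I2 B cs \<longleftrightarrow>
     distinct cs \<and> length cs \<ge> 2 \<and>
     (\<forall>i < length cs. exch_arc E I1 I2 B (cs ! i) (cs ! ((i + 1) mod length cs)))"

definition cycle_val :: "'a set \<Rightarrow> ('a \<Rightarrow> 'g::ab_group_add) \<Rightarrow> 'a list \<Rightarrow> 'g" where
  "cycle_val B f cs = (\<Sum>i<length cs. arc_val B f (cs ! i) (cs ! ((i + 1) mod length cs)))"

end

theory Submission
  imports Defs "HOL-Library.Product_Lexorder" "HOL-Combinatorics.Orbits"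
begin

text \<open>For another common basis \<open>B*\<close>, the symmetric exchange property (a consequence of Hall's
  theorem) gives bijections \<open>h1, h2 : B* - B0 \<rightarrow> B0 - B*\<close> such that \<open>B0 - h\<^sub>i y + y\<close> is a
  basis of \<open>M\<^sub>i\<close>. The orbits of the permutation \<open>h1\<^sup>-\<^sup>1 \<circ> h2\<close> of \<open>B* - B0\<close> are directed cycles of
  \<open>D(B0)\<close> whose labels add up to \<open>\<psi>(B*) - \<psi>(B0) \<noteq> 0\<close> and whose weights add up to
  \<open>w(B*) - w(B0)\<close>. Since \<open>B0\<close> has minimum weight, \<open>D(B0)\<close> has no negative cycle, so an orbit
  cycle with nonzero label weighs at most \<open>w(B*) - w(B0)\<close>; by the choice of \<open>C\<close> then
  \<open>w(B0 \<triangle> C) = w(B0) + w'(C) \<le> w(B*)\<close>.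

  The absence of negative cycles is the classical argument: on a shortest negative cycle, order the
  arcs by the weight of the path leading to them. A chord would close a shorter, hence non-negative,
  cycle, which forces it to go down in this order; so the exchanges along the cycle are acyclic, and
  by Krogdahl's lemma \<open>B0 \<triangle> C\<close> is a common basis lighter than \<open>B0\<close>.\<close>

section \<open>Matroid exchange properties\<close>

lemma basis_indep: "basis I B \<Longrightarrow> I B"
  unfolding basis_def by blast

lemma card_insert_Diff_swap:
  "finite B \<Longrightarrow> x \<in> B \<Longrightarrow> y \<notin> B \<Longrightarrow> card (insert y (B - {x})) = card B"
  by (simp add: card_Diff_singleton) (metis card_Diff1_less card_gt_0_iff Suc_pred empty_iff)

locale matroid_indep =
  fixes E :: "'a set" and I :: "'a set \<Rightarrow> bool"
  assumes matroid: "matroid E I"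
begin

lemma indep_subset_ground: "I X \<Longrightarrow> X \<subseteq> E"
  using matroid unfolding matroid_def by blast

lemma indep_finite: "I X \<Longrightarrow> finite X"
  using indep_subset_ground matroid finite_subset unfolding matroid_def by meson

lemma indep_subset: "I X \<Longrightarrow> Y \<subseteq> X \<Longrightarrow> I Y"
  using matroid unfolding matroid_def by blast

lemma indep_augment: "I X \<Longrightarrow> I Y \<Longrightarrow> card X < card Y \<Longrightarrow> \<exists>y\<in>Y - X. I (insert y X)"
  using matroid unfolding matroid_def by blast

lemma basis_finite: "basis I B \<Longrightarrow> finite B"
  using basis_indep indep_finite by blast

lemma indep_card_le_basis:
  assumes "basis I B" "I X"
  shows "card X \<le> card B"
proof (rule ccontr)
  assume "\<not> ?thesis"
  then obtain y where "y \<in> X - B" "I (insert y B)"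
    using indep_augment[of B X] assms unfolding basis_def by auto
  then show False using assms(1) unfolding basis_def by blast
qed

lemma basis_card_eq: "basis I A \<Longrightarrow> basis I B \<Longrightarrow> card A = card B"
  using indep_card_le_basis basis_indep by (meson le_antisym)

lemma basis_if_card_eq:
  assumes "basis I B" "I X" "card X = card B"
  shows "basis I X"
  unfolding basis_def
proof (intro conjI allI impI)
  show "I X" by fact
  fix Y assume Y: "I Y \<and> X \<subseteq> Y"
  show "Y = X"
  proof (rule ccontr)
    assume "Y \<noteq> X"
    with Y have "card X < card Y"
      using indep_finite[of Y] by (intro psubset_card_mono) auto
    with indep_card_le_basis[OF assms(1), of Y] Y assms(3) show False by simp
  qed
qed

lemma basis_exchangeI:
  assumes "basis I B" "x \<in> B" "y \<notin> B" "I (insert y (B - {x}))"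
  shows "basis I (insert y (B - {x}))"
  using basis_if_card_eq[OF assms(1,4)] card_insert_Diff_swap[OF basis_finite[OF assms(1)] assms(2,3)]
  by simp

lemma indep_extend_maximal:
  assumes "finite T" "I S" "S \<subseteq> T"
  shows "\<exists>K. S \<subseteq> K \<and> K \<subseteq> T \<and> I K \<and> (\<forall>z\<in>T - K. \<not> I (insert z K))"
  using assms(2,3)
proof (induction "card (T - S)" arbitrary: S rule: less_induct)
  case less
  show ?case
  proof (cases "\<exists>z\<in>T - S. I (insert z S)")
    case True
    then obtain z where z: "z \<in> T - S" "I (insert z S)" by blast
    have "card (T - insert z S) < card (T - S)"
      using z assms(1) by (metis Diff_insert card_Diff1_less finite_Diff)
    from less(1)[OF this z(2)] z less.prems show ?thesis by blast
  next
    case False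
    then show ?thesis using less.prems by blast
  qed
qed

text \<open>A maximal independent subset of \<open>insert y B\<close> containing \<open>insert y Z\<close> has the size of \<open>B\<close>,
  so it misses exactly one element of \<open>B\<close>, which lies outside \<open>Z\<close>.\<close>
lemma exchange_outside_subset:
  assumes B: "basis I B" and y: "y \<notin> B" and Z: "Z \<subseteq> B" and I_yZ: "I (insert y Z)"
  shows "\<exists>x\<in>B - Z. I (insert y (B - {x}))"
proof -
  have fB: "finite B" using B basis_finite by blast
  obtain K where K: "insert y Z \<subseteq> K" "K \<subseteq> insert y B" "I K"
    "\<forall>z\<in>insert y B - K. \<not> I (insert z K)"
    using indep_extend_maximal[of "insert y B" "insert y Z"] I_yZ Z fB by blast
  have "\<not> card K < card B"
  proof
    assume "card K < card B"
    then obtain z where "z \<in> B - K" "I (insert z K)"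
      using indep_augment[OF K(3) basis_indep[OF B]] by blast
    then show False using K(4) by blast
  qed
  then have cK: "card K = card B" using indep_card_le_basis[OF B K(3)] by simp
  have "K \<noteq> insert y B" using B y K(3) unfolding basis_def by blast
  then obtain x where x: "x \<in> insert y B" "x \<notin> K" using K(2) by blast
  have xB: "x \<in> B" using x K(1) by auto
  have Ksub: "K \<subseteq> insert y (B - {x})" using K(2) x by auto
  then have "K = insert y (B - {x})"
    using card_subset_eq[OF _ Ksub] card_insert_Diff_swap[OF fB xB y] cK fB by auto
  then show ?thesis using K(1,3) x xB by auto
qed

lemma indep_exchange_iff:
  assumes IB: "I B" and x1: "x1 \<in> B" and xp: "xp \<in> B" "xp \<noteq> x1"
    and y1: "y1 \<notin> B" and yp: "yp \<notin> B" "yp \<noteq> y1"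
    and I1: "I (insert y1 (B - {x1}))" and D: "\<not> I (insert yp (B - {x1}))"
  shows "I (insert yp (insert y1 (B - {x1}) - {xp})) \<longleftrightarrow> I (insert yp (B - {xp}))"
proof -
  define A where "A = B - {x1, xp}"
  have fB: "finite B" using IB indep_finite by blast
  have fA: "finite A" using fB A_def by simp
  have "card {x1, xp} \<le> card B" using fB x1 xp by (intro card_mono) auto
  moreover have "card A = card B - card {x1, xp}" unfolding A_def
    using fB x1 xp by (intro card_Diff_subset) auto
  ultimately have cA: "card A + 2 = card B" using xp by simp
  have e1: "insert yp (insert y1 (B - {x1}) - {xp}) = insert yp (insert y1 A)"
    unfolding A_def using y1 xp by auto
  have e2: "insert yp (B - {xp}) = insert yp (insert x1 A)"
    unfolding A_def using x1 xp by auto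
  have e3: "insert yp (B - {x1}) = insert yp (insert xp A)"
    unfolding A_def using x1 xp by auto
  have e4: "insert y1 (B - {x1}) = insert y1 (insert xp A)"
    unfolding A_def using x1 xp by auto
  have eB: "B = insert x1 (insert xp A)" unfolding A_def using x1 xp by auto
  have notin: "yp \<notin> A" "y1 \<notin> A" "x1 \<notin> A" "xp \<notin> A" using yp y1 unfolding A_def by auto
  have c1: "card (insert yp A) = card A + 1" using notin fA by simp
  show ?thesis
  proof
    assume "I (insert yp (insert y1 (B - {x1}) - {xp}))"
    then have "I (insert yp A)" unfolding e1 using indep_subset by blast
    moreover have "card (insert yp A) < card B" using c1 cA by simp
    ultimately obtain z where z: "z \<in> B - insert yp A" "I (insert z (insert yp A))"
      using indep_augment IB by blast
    have "z = x1 \<or> z = xp" using z(1) eB by auto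
    moreover have "z \<noteq> xp" using z(2) D e3 by (metis insert_commute)
    ultimately show "I (insert yp (B - {xp}))" using z(2) e2 by (metis insert_commute)
  next
    assume "I (insert yp (B - {xp}))"
    then have "I (insert yp A)" unfolding e2 using indep_subset by blast
    moreover have "card (insert yp A) < card (insert y1 (insert xp A))"
      using c1 notin fA y1 xp x1 by (cases "y1 = xp") auto
    ultimately obtain z where z: "z \<in> insert y1 (insert xp A) - insert yp A"
      "I (insert z (insert yp A))"
      using indep_augment I1 e4 by metis
    have "z = y1 \<or> z = xp" using z(1) by auto
    moreover have "z \<noteq> xp" using z(2) D e3 by (metis insert_commute)
    ultimately show "I (insert yp (insert y1 (B - {x1}) - {xp}))" using z(2) e1
      by (metis insert_commute)
  qed
qed

end

text \<open>The last condition says that the exchange graph restricted to the pairs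
  \<open>(xs a, ys a)\<close> is acyclic, which is how the unique perfect matching hypothesis of Krogdahl's
  lemma is used.\<close>
definition exchange_ordered ::
    "('a set \<Rightarrow> bool) \<Rightarrow> 'a set \<Rightarrow> ('i \<Rightarrow> 'a) \<Rightarrow> ('i \<Rightarrow> 'a) \<Rightarrow> 'i set \<Rightarrow> bool" where
  "exchange_ordered I B xs ys P \<longleftrightarrow>
     finite P \<and> inj_on xs P \<and> inj_on ys P \<and> xs ` P \<subseteq> B \<and> ys ` P \<inter> B = {} \<and>
     (\<forall>a\<in>P. I (insert (ys a) (B - {xs a}))) \<and>
     (\<forall>S\<subseteq>P. S \<noteq> {} \<longrightarrow> (\<exists>a\<in>S. \<forall>b\<in>S. b \<noteq> a \<longrightarrow> \<not> I (insert (ys b) (B - {xs a}))))"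

context matroid_indep
begin

lemma exchange_ordered_remove_sink:
  assumes ord: "exchange_ordered I B xs ys P" and IB: "I B" and a: "a \<in> P"
    and sink: "\<forall>b\<in>P. b \<noteq> a \<longrightarrow> \<not> I (insert (ys b) (B - {xs a}))"
  shows "exchange_ordered I (insert (ys a) (B - {xs a})) xs ys (P - {a})"
proof -
  from ord have fin: "finite P" and inj_xs: "inj_on xs P" and inj_ys: "inj_on ys P"
    and sub_xs: "xs ` P \<subseteq> B" and disj_ys: "ys ` P \<inter> B = {}"
    and exch: "\<forall>a\<in>P. I (insert (ys a) (B - {xs a}))"
    and sinks: "\<forall>S\<subseteq>P. S \<noteq> {} \<longrightarrow>
      (\<exists>a\<in>S. \<forall>b\<in>S. b \<noteq> a \<longrightarrow> \<not> I (insert (ys b) (B - {xs a})))"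
    unfolding exchange_ordered_def by blast+
  define B' where "B' = insert (ys a) (B - {xs a})"
  have xs_ne: "xs b \<noteq> xs a" and ys_ne: "ys b \<noteq> ys a" if "b \<in> P - {a}" for b
    using inj_xs inj_ys a that by (auto dest: inj_onD)
  have same: "I (insert (ys b) (B' - {xs a'})) \<longleftrightarrow> I (insert (ys b) (B - {xs a'}))"
    if "a' \<in> P - {a}" "b \<in> P - {a}" for a' b
    unfolding B'_def
  proof (rule indep_exchange_iff[OF IB])
    show "xs a \<in> B" "xs a' \<in> B" "ys a \<notin> B" "ys b \<notin> B"
      using sub_xs disj_ys a that by auto
    show "I (insert (ys a) (B - {xs a}))" using exch a by blast
    show "xs a' \<noteq> xs a" "ys b \<noteq> ys a" using xs_ne ys_ne that by auto
    show "\<not> I (insert (ys b) (B - {xs a}))" using sink that by blast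
  qed
  have sinks': "\<forall>S\<subseteq>P - {a}. S \<noteq> {} \<longrightarrow>
      (\<exists>a'\<in>S. \<forall>b\<in>S. b \<noteq> a' \<longrightarrow> \<not> I (insert (ys b) (B' - {xs a'})))"
  proof (intro allI impI)
    fix S assume S: "S \<subseteq> P - {a}" "S \<noteq> {}"
    then obtain a' where "a' \<in> S" "\<forall>b\<in>S. b \<noteq> a' \<longrightarrow> \<not> I (insert (ys b) (B - {xs a'}))"
      using sinks by (metis Diff_subset subset_trans)
    then show "\<exists>a'\<in>S. \<forall>b\<in>S. b \<noteq> a' \<longrightarrow> \<not> I (insert (ys b) (B' - {xs a'}))"
      using same S by blast
  qed
  have exch': "\<forall>b\<in>P - {a}. I (insert (ys b) (B' - {xs b}))"
    using same exch by blast
  have "finite (P - {a})" "inj_on xs (P - {a})" "inj_on ys (P - {a})"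
    using fin inj_xs inj_ys by (auto intro: inj_on_subset)
  moreover have "xs ` (P - {a}) \<subseteq> B'" using sub_xs xs_ne unfolding B'_def by auto
  moreover have "ys ` (P - {a}) \<inter> B' = {}" using disj_ys ys_ne unfolding B'_def by blast
  ultimately show ?thesis
    using exch' sinks' unfolding exchange_ordered_def B'_def[symmetric] by (intro conjI)
qed

theorem indep_exchange_ordered:
  assumes "exchange_ordered I B xs ys P" "I B"
  shows "I ((B - xs ` P) \<union> ys ` P)"
  using assms
proof (induction "card P" arbitrary: P B rule: less_induct)
  case (less P B)
  show ?case
  proof (cases "P = {}")
    case True then show ?thesis using less.prems by simp
  next
    case False
    then obtain a where a: "a \<in> P"
      and sink: "\<forall>b\<in>P. b \<noteq> a \<longrightarrow> \<not> I (insert (ys b) (B - {xs a}))"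
      using less.prems(1) unfolding exchange_ordered_def by blast
    define B' where "B' = insert (ys a) (B - {xs a})"
    have fin: "finite P" and swap: "I B'" and sx: "xs ` P \<subseteq> B" and sy: "ys ` P \<inter> B = {}"
      using less.prems(1) a unfolding exchange_ordered_def B'_def by auto
    have "I ((B' - xs ` (P - {a})) \<union> ys ` (P - {a}))"
      using less.hyps[OF card_Diff1_less[OF fin a] exchange_ordered_remove_sink[OF less.prems a sink]]
        swap unfolding B'_def by blast
    moreover have "(B' - xs ` (P - {a})) \<union> ys ` (P - {a}) = (B - xs ` P) \<union> ys ` P"
      using sx sy a unfolding B'_def by auto
    ultimately show ?thesis by simp
  qed
qed

end

section \<open>Hall's theorem and the basis exchange bijection\<close>

lemma hall_condition_remove_critical:
  assumes hall: "\<forall>S\<subseteq>K. card S \<le> card (\<Union>(A ` S))"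
    and fin: "finite K" "\<forall>i\<in>K. finite (A i)"
    and S0: "S0 \<subseteq> K" "card (\<Union>(A ` S0)) = card S0"
  shows "\<forall>S\<subseteq>K - S0. card S \<le> card (\<Union>i\<in>S. A i - \<Union>(A ` S0))"
proof (intro allI impI)
  fix S assume S: "S \<subseteq> K - S0"
  define U where "U = \<Union>(A ` S0)"
  have "finite (\<Union>(A ` (S \<union> S0)))"
    using S S0(1) fin by (intro finite_UN_I) (auto intro: rev_finite_subset)
  moreover have sub: "U \<subseteq> \<Union>(A ` (S \<union> S0))" unfolding U_def by auto
  moreover have "(\<Union>i\<in>S. A i - U) = \<Union>(A ` (S \<union> S0)) - U" unfolding U_def by auto
  ultimately have "card (\<Union>i\<in>S. A i - U) = card (\<Union>(A ` (S \<union> S0))) - card U"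
    by (simp add: card_Diff_subset finite_subset)
  moreover have "card (S \<union> S0) \<le> card (\<Union>(A ` (S \<union> S0)))"
    using hall S S0(1) by (meson Diff_subset Un_least order_trans)
  moreover have "card (S \<union> S0) = card S + card S0"
    using S S0(1) fin by (intro card_Un_disjoint) (auto intro: finite_subset)
  ultimately show "card S \<le> card (\<Union>i\<in>S. A i - \<Union>(A ` S0))"
    using S0(2) unfolding U_def by linarith
qed

lemma hall_condition_remove_singleton:
  assumes strict: "\<And>S. S \<subseteq> K \<Longrightarrow> S \<noteq> {} \<Longrightarrow> S \<noteq> K \<Longrightarrow> card S < card (\<Union>(A ` S))"
    and i0: "i0 \<in> K"
  shows "\<forall>S\<subseteq>K - {i0}. card S \<le> card (\<Union>i\<in>S. A i - {a})"
proof (intro allI impI)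
  fix S assume S: "S \<subseteq> K - {i0}"
  show "card S \<le> card (\<Union>i\<in>S. A i - {a})"
  proof (cases "S = {}")
    case False
    then have "card S < card (\<Union>(A ` S))" using strict[of S] S i0 by auto
    moreover have "(\<Union>i\<in>S. A i - {a}) = \<Union>(A ` S) - {a}" by auto
    then have "card (\<Union>(A ` S)) - 1 \<le> card (\<Union>i\<in>S. A i - {a})"
      by (simp add: card_Diff_singleton_if)
    ultimately show ?thesis by linarith
  qed simp
qed

text \<open>Halmos and Vaughan's induction: if some proper subset \<open>S0\<close> is critical, match it and,
  separately, the rest avoiding \<open>\<Union>(A ` S0)\<close>; otherwise match any \<open>i0\<close> to any \<open>a \<in> A i0\<close>.\<close>
theorem hall_marriage:
  assumes "finite K" "\<forall>i\<in>K. finite (A i)" "\<forall>S\<subseteq>K. card S \<le> card (\<Union>(A ` S))"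
  shows "\<exists>f. inj_on f K \<and> (\<forall>i\<in>K. f i \<in> A i)"
  using assms
proof (induction "card K" arbitrary: K A rule: less_induct)
  case (less K A)
  note fin = less.prems(1,2) and hall = less.prems(3)
  show ?case
  proof (cases "\<exists>S0. S0 \<subseteq> K \<and> S0 \<noteq> {} \<and> S0 \<noteq> K \<and> card (\<Union>(A ` S0)) = card S0")
    case True
    then obtain S0 where S0: "S0 \<subseteq> K" "S0 \<noteq> {}" "S0 \<noteq> K" "card (\<Union>(A ` S0)) = card S0"
      by blast
    define U where "U = \<Union>(A ` S0)"
    have "finite S0" using S0(1) fin finite_subset by blast
    moreover have "card S0 < card K" using S0 fin by (meson psubsetI psubset_card_mono)
    ultimately obtain f1 where f1: "inj_on f1 S0" "\<forall>i\<in>S0. f1 i \<in> A i"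
      using less.hyps[of S0 A] S0(1) fin hall by (meson subset_trans subsetD)
    have "card (K - S0) < card K" using S0(1,2) fin by (intro psubset_card_mono) auto
    then obtain f2 where f2: "inj_on f2 (K - S0)" "\<forall>i\<in>K - S0. f2 i \<in> A i - U"
      using less.hyps[of "K - S0" "\<lambda>i. A i - U"] fin
        hall_condition_remove_critical[OF hall fin S0(1,4)] unfolding U_def by auto
    define f where "f i = (if i \<in> S0 then f1 i else f2 i)" for i
    have "inj_on f (S0 \<union> (K - S0))"
      unfolding inj_on_Un
    proof (intro conjI)
      show "inj_on f S0" using f1(1) by (rule inj_on_cong[THEN iffD1, rotated]) (simp add: f_def)
      show "inj_on f (K - S0)" using f2(1) by (rule inj_on_cong[THEN iffD1, rotated]) (simp add: f_def)
      show "f ` (S0 - (K - S0)) \<inter> f ` (K - S0 - S0) = {}"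
        using f1(2) f2(2) by (auto simp: f_def U_def)
    qed
    moreover have "S0 \<union> (K - S0) = K" using S0(1) by blast
    moreover have "\<forall>i\<in>K. f i \<in> A i" using f1 f2 by (simp add: f_def)
    ultimately show ?thesis by auto
  next
    case no_critical: False
    show ?thesis
    proof (cases "K = {}")
      case False
      then obtain i0 where i0: "i0 \<in> K" by blast
      have "card {i0} \<le> card (\<Union>(A ` {i0}))" using hall i0 by blast
      then obtain a where a: "a \<in> A i0" by fastforce
      have strict: "card S < card (\<Union>(A ` S))" if "S \<subseteq> K" "S \<noteq> {}" "S \<noteq> K" for S
        using that hall no_critical by (metis le_neq_implies_less)
      have "card (K - {i0}) < card K" using i0 fin by (metis card_Diff1_less)
      then obtain f' where f': "inj_on f' (K - {i0})" "\<forall>i\<in>K - {i0}. f' i \<in> A i - {a}"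
        using less.hyps[of "K - {i0}" "\<lambda>i. A i - {a}"] fin
          hall_condition_remove_singleton[OF strict i0] by auto
      have "inj_on (f'(i0 := a)) (insert i0 (K - {i0}))"
        using f' by (auto simp: inj_on_def)
      moreover have "insert i0 (K - {i0}) = K" using i0 by blast
      ultimately show ?thesis using f' a by (intro exI[of _ "f'(i0 := a)"]) auto
    qed simp
  qed
qed

theorem (in matroid_indep) basis_exchange_bijection:
  assumes B: "basis I B" and B': "basis I B'"
  shows "\<exists>h. bij_betw h (B' - B) (B - B') \<and> (\<forall>y\<in>B' - B. basis I (insert y (B - {h y})))"
proof -
  have fB: "finite B" and fB': "finite B'" using B B' basis_finite by auto
  define N where "N y = {x \<in> B - B'. I (insert y (B - {x}))}" for y
  have "card S \<le> card (\<Union>(N ` S))" if S: "S \<subseteq> B' - B" for S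
  proof -
    define Z where "Z = (B \<inter> B') \<union> \<Union>(N ` S)"
    have ZB: "Z \<subseteq> B" unfolding Z_def N_def by auto
    have no_ext: "\<not> I (insert y Z)" if y: "y \<in> S" for y
    proof
      assume "I (insert y Z)"
      then obtain x where "x \<in> B - Z" "I (insert y (B - {x}))"
        using exchange_outside_subset[OF B _ ZB] y S by blast
      then have "x \<in> N y" "x \<notin> \<Union>(N ` S)" unfolding Z_def N_def by auto
      then show False using y by blast
    qed
    define W where "W = S \<union> (B \<inter> B')"
    have "I W" using indep_subset[OF basis_indep[OF B'], of W] S unfolding W_def by blast
    then have "\<not> card Z < card W"
      using indep_augment[OF indep_subset[OF basis_indep[OF B] ZB]] no_ext
      unfolding W_def Z_def by blast
    moreover have "card W = card S + card (B \<inter> B')" unfolding W_def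
      using S fB fB' by (intro card_Un_disjoint) (auto intro: finite_subset)
    moreover have "card Z = card (B \<inter> B') + card (\<Union>(N ` S))" unfolding Z_def
      using fB by (intro card_Un_disjoint) (auto simp: N_def intro: finite_subset)
    ultimately show "card S \<le> card (\<Union>(N ` S))" by linarith
  qed
  then obtain h where h: "inj_on h (B' - B)" "\<forall>y\<in>B' - B. h y \<in> N y"
    using hall_marriage[of "B' - B" N] fB fB' unfolding N_def by auto
  have "card (B' - B) = card (B - B')"
    using basis_card_eq[OF B B'] fB fB' by (simp add: card_Diff_subset_Int Int_commute)
  moreover have img: "h ` (B' - B) \<subseteq> B - B'" using h(2) N_def by auto
  ultimately have "h ` (B' - B) = B - B'"
    using card_subset_eq card_image[OF h(1)] fB by (metis finite_Diff)
  then have "bij_betw h (B' - B) (B - B')" using h(1) by (simp add: bij_betw_def)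
  moreover have "basis I (insert y (B - {h y}))" if "y \<in> B' - B" for y
    using basis_exchangeI[OF B] h(2) that unfolding N_def by auto
  ultimately show ?thesis by blast
qed

section \<open>Weights of directed cycles\<close>

lemma arc_val_head: "arc_val B f u v = arc_val B f v v"
  unfolding arc_val_def by simp

lemma sum_rotate_mod:
  fixes n :: nat
  assumes "0 < n"
  shows "(\<Sum>i<n. h ((i + 1) mod n)) = (\<Sum>i<n. h i)"
proof -
  have "inj_on (\<lambda>i. (i + 1) mod n) {..<n}"
    by (rule inj_onI) (simp add: mod_if split: if_splits)
  then have "bij_betw (\<lambda>i. (i + 1) mod n) {..<n} {..<n}"
    using assms by (intro bij_betw_imageI endo_inj_surj) auto
  then show ?thesis using sum.reindex_bij_betw by blast
qed

lemma cycle_val_eq_sum_set: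
  assumes "distinct cs"
  shows "cycle_val B f cs = (\<Sum>v\<in>set cs. arc_val B f v v)"
proof (cases "cs = []")
  case True then show ?thesis by (simp add: cycle_val_def)
next
  case False
  have "cycle_val B f cs = (\<Sum>i<length cs. arc_val B f (cs ! ((i + 1) mod length cs)) (cs ! ((i + 1) mod length cs)))"
    unfolding cycle_val_def by (subst arc_val_head) simp
  also have "\<dots> = (\<Sum>i<length cs. arc_val B f (cs ! i) (cs ! i))"
    using sum_rotate_mod[of "length cs" "\<lambda>i. arc_val B f (cs ! i) (cs ! i)"] False by simp
  also have "\<dots> = (\<Sum>v\<in>set cs. arc_val B f v v)"
    using assms by (simp add: sum_list_sum_nth atLeast0LessThan flip: sum_list_distinct_conv_sum_set)
  finally show ?thesis .
qed

lemma sum_arc_val: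
  assumes "finite S"
  shows "(\<Sum>v\<in>S. arc_val B f v v) = sum f (S - B) - sum f (S \<inter> B)"
proof -
  have "(\<Sum>v\<in>S. arc_val B f v v) = (\<Sum>v\<in>S - B. arc_val B f v v) + (\<Sum>v\<in>S \<inter> B. arc_val B f v v)"
    using sum.Int_Diff[OF assms, of "\<lambda>v. arc_val B f v v" B] by (simp add: add.commute)
  also have "\<dots> = sum f (S - B) + (\<Sum>v\<in>S \<inter> B. - f v)"
    unfolding arc_val_def by (intro arg_cong2[where f = "(+)"] sum.cong) auto
  finally show ?thesis by (simp add: sum_negf)
qed

lemma sum_symdiff_eq_cycle_val:
  assumes "finite B" "distinct cs"
  shows "sum f (B - set cs \<union> (set cs - B)) = sum f B + cycle_val B f cs"
proof -
  have "sum f (B - set cs \<union> (set cs - B)) = sum f (B - set cs) + sum f (set cs - B)"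
    using assms by (intro sum.union_disjoint) auto
  also have "sum f (B - set cs) = sum f B - sum f (set cs \<inter> B)"
    using sum.Int_Diff[OF assms(1), of f "set cs"] by (simp add: Int_commute algebra_simps)
  also have "sum f (set cs - B) = cycle_val B f cs + sum f (set cs \<inter> B)"
    using cycle_val_eq_sum_set[OF assms(2), of B f] sum_arc_val[of "set cs" B f] by simp
  finally show ?thesis by (simp add: algebra_simps)
qed

lemma mod_add_left_inj:
  fixes n :: nat
  assumes "i < n" "j < n" "(q + i) mod n = (q + j) mod n"
  shows "i = j"
proof (rule ccontr)
  have False if ab: "a < b" "b < n" "(q + a) mod n = (q + b) mod n" for a b
  proof -
    have "n dvd b - a" using mod_eq_dvd_iff_nat[of "q + a" "q + b" n] ab by simp
    then show False using ab nat_dvd_not_less[of "b - a" n] by simp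
  qed
  then show "i \<noteq> j \<Longrightarrow> False" using assms by (metis linorder_neqE_nat)
qed

lemma exists_sink_min_key:
  fixes key :: "'i \<Rightarrow> 'k::linorder"
  assumes "finite S" "S \<noteq> {}" "\<And>a b. a \<in> S \<Longrightarrow> b \<in> S \<Longrightarrow> b \<noteq> a \<Longrightarrow> R a b \<Longrightarrow> key b < key a"
  shows "\<exists>a\<in>S. \<forall>b\<in>S. b \<noteq> a \<longrightarrow> \<not> R a b"
proof -
  have "Min (key ` S) \<in> key ` S" using assms(1,2) by (intro Min_in) auto
  then obtain a where a: "a \<in> S" "key a = Min (key ` S)" by auto
  have "key a \<le> key b" if "b \<in> S" for b using a that assms(1) by simp
  then show ?thesis using a assms(3) by (meson leD)
qed

lemma exists_sink_max_key:
  fixes key :: "'i \<Rightarrow> 'k::linorder"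
  assumes "finite S" "S \<noteq> {}" "\<And>a b. a \<in> S \<Longrightarrow> b \<in> S \<Longrightarrow> b \<noteq> a \<Longrightarrow> R a b \<Longrightarrow> key a < key b"
  shows "\<exists>a\<in>S. \<forall>b\<in>S. b \<noteq> a \<longrightarrow> \<not> R a b"
proof -
  have "Max (key ` S) \<in> key ` S" using assms(1,2) by (intro Max_in) auto
  then obtain a where a: "a \<in> S" "key a = Max (key ` S)" by auto
  have "key b \<le> key a" if "b \<in> S" for b using a that assms(1) by simp
  then show ?thesis using a assms(3) by (meson leD)
qed

section \<open>A minimum-weight common basis has no negative cycle\<close>

locale min_weight_common_basis =
  M1: matroid_indep E I1 + M2: matroid_indep E I2 for E I1 I2 +
  fixes B0 :: "'a set" and w :: "'a \<Rightarrow> real"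
  assumes common_basis_B0: "common_basis I1 I2 B0"
    and min_weight: "\<forall>B. common_basis I1 I2 B \<longrightarrow> sum w B0 \<le> sum w B"
begin

lemma basis_B0: "basis I1 B0" "basis I2 B0"
  using common_basis_B0 unfolding common_basis_def by auto

lemma finite_B0: "finite B0"
  using M1.basis_finite basis_B0 by blast

lemma B0_subset_ground: "B0 \<subseteq> E"
  using M1.indep_subset_ground basis_B0 basis_indep by blast

end

locale shortest_negative_cycle = min_weight_common_basis +
  fixes c :: "'a list"
  assumes dicycle_c: "dicycle E I1 I2 B0 c" and negative: "cycle_val B0 w c < 0"
    and shortest: "\<And>c'. dicycle E I1 I2 B0 c' \<Longrightarrow> cycle_val B0 w c' < 0 \<Longrightarrow> length c \<le> length c'"
begin

lemma length_ge_2: "2 \<le> length c" and distinct_c: "distinct c"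
  and arc: "i < length c \<Longrightarrow> exch_arc E I1 I2 B0 (c ! i) (c ! ((i + 1) mod length c))"
  using dicycle_c unfolding dicycle_def by auto

lemma length_pos: "0 < length c"
  using length_ge_2 by linarith

text \<open>\<open>head_weight i\<close> is the weight of the arc entering the \<open>i\<close>-th vertex, indices taken cyclically.\<close>
definition head_weight :: "nat \<Rightarrow> real" where
  "head_weight i = arc_val B0 w (c ! (i mod length c)) (c ! (i mod length c))"

definition prefix_weight :: "nat \<Rightarrow> real" where
  "prefix_weight m = (\<Sum>i<m. head_weight i)"

lemma prefix_weight_length: "prefix_weight (length c) = cycle_val B0 w c"
  unfolding prefix_weight_def head_weight_def cycle_val_eq_sum_set[OF distinct_c]
  using distinct_c by (simp add: sum_list_sum_nth atLeast0LessThan flip: sum_list_distinct_conv_sum_set)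

lemma prefix_weight_add_length: "prefix_weight (m + length c) = prefix_weight m + prefix_weight (length c)"
proof (induction m)
  case (Suc m)
  have "head_weight (m + length c) = head_weight m" unfolding head_weight_def by simp
  then show ?case using Suc unfolding prefix_weight_def by simp
qed (simp add: prefix_weight_def)

lemma prefix_weight_add: "prefix_weight (q + L) = prefix_weight q + (\<Sum>j<L. head_weight (q + j))"
  by (induction L) (simp_all add: prefix_weight_def)

text \<open>A chord from the last to the first vertex of a proper segment of \<open>c\<close> closes a shorter
  cycle, which by minimality of \<open>c\<close> is not negative.\<close>
lemma segment_weight_nonneg:
  assumes q: "q < length c" and L: "2 \<le> L" "L < length c"
    and chord: "exch_arc E I1 I2 B0 (c ! ((q + L - 1) mod length c)) (c ! q)"
  shows "0 \<le> (\<Sum>j<L. head_weight (q + j))"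
proof (rule ccontr)
  assume neg: "\<not> ?thesis"
  define n where "n = length c"
  define D where "D = map (\<lambda>j. c ! ((q + j) mod n)) [0..<L]"
  have len_D: "length D = L" unfolding D_def by simp
  have nth_D: "j < L \<Longrightarrow> D ! j = c ! ((q + j) mod n)" for j unfolding D_def by simp
  have n_pos: "0 < n" using length_pos n_def by simp
  have distinct_D: "distinct D"
  proof (subst distinct_conv_nth, intro allI impI)
    fix i j assume ij: "i < length D" "j < length D" "i \<noteq> j"
    then have "(q + i) mod n \<noteq> (q + j) mod n" using mod_add_left_inj[of i n j q] len_D L n_def by auto
    then show "D ! i \<noteq> D ! j" using ij len_D nth_D distinct_c n_def n_pos
      by (simp add: nth_eq_iff_index_eq)
  qed
  have "dicycle E I1 I2 B0 D"
    unfolding dicycle_def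
  proof (intro conjI allI impI)
    show "distinct D" by fact
    show "2 \<le> length D" using len_D L by simp
    fix j assume j: "j < length D"
    show "exch_arc E I1 I2 B0 (D ! j) (D ! ((j + 1) mod length D))"
    proof (cases "j + 1 < L")
      case True
      have "exch_arc E I1 I2 B0 (c ! ((q + j) mod n)) (c ! (((q + j) mod n + 1) mod n))"
        using arc[of "(q + j) mod n"] n_pos n_def by simp
      moreover have "((q + j) mod n + 1) mod n = (q + (j + 1)) mod n" by (simp add: mod_Suc_eq)
      ultimately show ?thesis using True len_D nth_D j by simp
    next
      case False
      then have "j + 1 = L" using j len_D by simp
      moreover have "q + L - 1 = q + j" using \<open>j + 1 = L\<close> by simp
      ultimately show ?thesis using chord len_D nth_D[of j] nth_D[of 0] q n_def L by simp
    qed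
  qed
  moreover have "cycle_val B0 w D = sum_list (map (\<lambda>v. arc_val B0 w v v) D)"
    using cycle_val_eq_sum_set[OF distinct_D] distinct_D by (simp add: sum_list_distinct_conv_sum_set)
  moreover have "\<dots> = (\<Sum>j<L. head_weight (q + j))"
    unfolding D_def head_weight_def n_def by (simp add: sum_list_sum_nth atLeast0LessThan)
  ultimately show False using shortest[of D] neg len_D L by simp
qed

lemma prefix_weight_backward_chord:
  assumes "p < length c" "q < p" "\<not> (q = 0 \<and> p = length c - 1)"
    and "exch_arc E I1 I2 B0 (c ! p) (c ! q)"
  shows "prefix_weight q \<le> prefix_weight (p + 1)"
proof -
  have "0 \<le> (\<Sum>j<p - q + 1. head_weight (q + j))"
    using assms by (intro segment_weight_nonneg) auto
  then show ?thesis using prefix_weight_add[of q "p - q + 1"] assms by simp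
qed

lemma prefix_weight_forward_chord:
  assumes "p < q" "q < length c" "q \<noteq> p + 1"
    and "exch_arc E I1 I2 B0 (c ! p) (c ! q)"
  shows "prefix_weight q \<le> prefix_weight (p + 1) + prefix_weight (length c)"
proof -
  have "(q + (p + length c - q + 1) - 1) mod length c = p" using assms by simp
  then have "0 \<le> (\<Sum>j<p + length c - q + 1. head_weight (q + j))"
    using assms by (intro segment_weight_nonneg) auto
  moreover have "q + (p + length c - q + 1) = (p + 1) + length c" using assms by simp
  ultimately show ?thesis
    using prefix_weight_add[of q "p + length c - q + 1"] prefix_weight_add_length[of "p + 1"] by simp
qed

text \<open>Ordering the arcs \<open>c ! p \<rightarrow> c ! (p + 1)\<close> of the cycle by this key, a chord from the tail
  of one such arc to the head of another always leads to a smaller key.\<close>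
definition chord_key :: "nat \<Rightarrow> real \<times> nat" where
  "chord_key p = (prefix_weight (p + 1), p)"

lemma chord_key_less:
  assumes p: "p < length c" and p': "p' < length c" and ne: "p \<noteq> p'"
    and not_arc: "(p' + 1) mod length c \<noteq> p"
    and chord: "exch_arc E I1 I2 B0 (c ! p) (c ! ((p' + 1) mod length c))"
  shows "chord_key p' < chord_key p"
proof -
  have total: "prefix_weight (length c) < 0" using prefix_weight_length negative by simp
  show ?thesis
  proof (cases "p' + 1 < length c")
    case True
    then have q: "(p' + 1) mod length c = p' + 1" by simp
    show ?thesis
    proof (cases "p' + 1 \<le> p")
      case True
      then have "prefix_weight (p' + 1) \<le> prefix_weight (p + 1)"
        using prefix_weight_backward_chord[of p "p' + 1"] chord q p not_arc by simp
      then show ?thesis using True unfolding chord_key_def by auto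
    next
      case False
      then have "prefix_weight (p' + 1) \<le> prefix_weight (p + 1) + prefix_weight (length c)"
        using prefix_weight_forward_chord[of p "p' + 1"] chord q not_arc True ne by simp
      then show ?thesis using total unfolding chord_key_def by auto
    qed
  next
    case False
    then have last: "p' + 1 = length c" using p' by simp
    then have "0 < p" using not_arc by auto
    then have "prefix_weight 0 \<le> prefix_weight (p + 1)"
      using prefix_weight_backward_chord[of p 0] chord last p ne by simp
    then show ?thesis using total last unfolding chord_key_def prefix_weight_def by auto
  qed
qed

lemma set_c_subset_ground: "set c \<subseteq> E"
proof
  fix v assume "v \<in> set c"
  then obtain i where "i < length c" "v = c ! i" by (auto simp: in_set_conv_nth)
  then show "v \<in> E" using arc B0_subset_ground unfolding exch_arc_def by auto
qed

lemma arc_out_of_B0: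
  "i < length c \<Longrightarrow> c ! i \<in> B0 \<Longrightarrow> c ! ((i + 1) mod length c) \<notin> B0 \<and>
    basis I1 (insert (c ! ((i + 1) mod length c)) (B0 - {c ! i}))"
  using arc[of i] unfolding exch_arc_def by auto

lemma arc_into_B0:
  "i < length c \<Longrightarrow> c ! i \<notin> B0 \<Longrightarrow> c ! ((i + 1) mod length c) \<in> B0 \<and>
    basis I2 (insert (c ! i) (B0 - {c ! ((i + 1) mod length c)}))"
  using arc[of i] unfolding exch_arc_def by auto

lemma exists_pred:
  assumes "q < length c"
  shows "\<exists>p < length c. (p + 1) mod length c = q"
proof (cases q)
  case 0 then show ?thesis using length_pos by (intro exI[of _ "length c - 1"]) auto
next
  case (Suc r) then show ?thesis using assms by (intro exI[of _ r]) auto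
qed

lemma nth_c_inj: "a < length c \<Longrightarrow> b < length c \<Longrightarrow> c ! a = c ! b \<Longrightarrow> a = b"
  using distinct_c by (simp add: nth_eq_iff_index_eq)

lemma next_c_inj:
  assumes "a < length c" "b < length c" "c ! ((a + 1) mod length c) = c ! ((b + 1) mod length c)"
  shows "a = b"
proof -
  have "(1 + a) mod length c = (1 + b) mod length c"
    using assms(3) nth_c_inj length_pos by (simp add: add.commute)
  then show "a = b" using mod_add_left_inj assms(1,2) by blast
qed

lemma chord_arc_M1:
  assumes "p < length c" "p' < length c" "c ! p \<in> B0" "c ! p' \<in> B0"
    "I1 (insert (c ! ((p' + 1) mod length c)) (B0 - {c ! p}))"
  shows "exch_arc E I1 I2 B0 (c ! p) (c ! ((p' + 1) mod length c))"
proof -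
  have "c ! ((p' + 1) mod length c) \<notin> B0" using arc_out_of_B0 assms by blast
  moreover have "c ! ((p' + 1) mod length c) \<in> E" using set_c_subset_ground length_pos by auto
  ultimately show ?thesis
    unfolding exch_arc_def using M1.basis_exchangeI[OF basis_B0(1)] assms by auto
qed

lemma chord_arc_M2:
  assumes "p < length c" "p' < length c" "c ! p \<notin> B0" "c ! p' \<notin> B0"
    "I2 (insert (c ! p') (B0 - {c ! ((p + 1) mod length c)}))"
  shows "exch_arc E I1 I2 B0 (c ! p') (c ! ((p + 1) mod length c))"
proof -
  have "c ! ((p + 1) mod length c) \<in> B0" using arc_into_B0 assms by blast
  moreover have "c ! p' \<in> E" using set_c_subset_ground assms by auto
  ultimately show ?thesis
    unfolding exch_arc_def using M2.basis_exchangeI[OF basis_B0(2)] assms by auto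
qed

definition tails_in_B0 :: "nat set" where
  "tails_in_B0 = {p. p < length c \<and> c ! p \<in> B0}"

definition tails_out_B0 :: "nat set" where
  "tails_out_B0 = {p. p < length c \<and> c ! p \<notin> B0}"

lemma image_tails_in_B0:
  "(!) c ` tails_in_B0 = set c \<inter> B0"
  "(\<lambda>p. c ! ((p + 1) mod length c)) ` tails_in_B0 = set c - B0"
proof -
  show "(!) c ` tails_in_B0 = set c \<inter> B0"
    unfolding tails_in_B0_def by (auto simp: in_set_conv_nth)
  have "v \<in> (\<lambda>p. c ! ((p + 1) mod length c)) ` tails_in_B0" if v: "v \<in> set c - B0" for v
  proof -
    obtain q where q: "q < length c" "v = c ! q" "c ! q \<notin> B0"
      using v in_set_conv_nth[of v c] by auto
    then obtain p where p: "p < length c" "(p + 1) mod length c = q" using exists_pred by blast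
    then have "c ! p \<in> B0" using arc_into_B0[of p] q by auto
    then show ?thesis using p q unfolding tails_in_B0_def by auto
  qed
  then show "(\<lambda>p. c ! ((p + 1) mod length c)) ` tails_in_B0 = set c - B0"
    using arc_out_of_B0 length_pos unfolding tails_in_B0_def by (auto intro!: nth_mem)
qed

lemma image_tails_out_B0:
  "(!) c ` tails_out_B0 = set c - B0"
  "(\<lambda>p. c ! ((p + 1) mod length c)) ` tails_out_B0 = set c \<inter> B0"
proof -
  show "(!) c ` tails_out_B0 = set c - B0"
    unfolding tails_out_B0_def by (auto simp: in_set_conv_nth)
  have "v \<in> (\<lambda>p. c ! ((p + 1) mod length c)) ` tails_out_B0" if v: "v \<in> set c \<inter> B0" for v
  proof -
    obtain q where q: "q < length c" "v = c ! q" "c ! q \<in> B0"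
      using v in_set_conv_nth[of v c] by auto
    then obtain p where p: "p < length c" "(p + 1) mod length c = q" using exists_pred by blast
    then have "c ! p \<notin> B0" using arc_out_of_B0[of p] q by auto
    then show ?thesis using p q unfolding tails_out_B0_def by auto
  qed
  then show "(\<lambda>p. c ! ((p + 1) mod length c)) ` tails_out_B0 = set c \<inter> B0"
    using arc_into_B0 length_pos unfolding tails_out_B0_def by (auto intro!: nth_mem)
qed

lemma exchange_ordered_M1:
  "exchange_ordered I1 B0 ((!) c) (\<lambda>p. c ! ((p + 1) mod length c)) tails_in_B0"
  unfolding exchange_ordered_def
proof (intro conjI)
  show "finite tails_in_B0" unfolding tails_in_B0_def by simp
  show "inj_on ((!) c) tails_in_B0" "inj_on (\<lambda>p. c ! ((p + 1) mod length c)) tails_in_B0"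
    using nth_c_inj next_c_inj unfolding tails_in_B0_def by (auto intro: inj_onI)
  show "(!) c ` tails_in_B0 \<subseteq> B0" "(\<lambda>p. c ! ((p + 1) mod length c)) ` tails_in_B0 \<inter> B0 = {}"
    using image_tails_in_B0 by auto
  show "\<forall>a\<in>tails_in_B0. I1 (insert (c ! ((a + 1) mod length c)) (B0 - {c ! a}))"
    using arc_out_of_B0 basis_indep unfolding tails_in_B0_def by blast
  show "\<forall>S\<subseteq>tails_in_B0. S \<noteq> {} \<longrightarrow> (\<exists>a\<in>S. \<forall>b\<in>S. b \<noteq> a \<longrightarrow>
      \<not> I1 (insert (c ! ((b + 1) mod length c)) (B0 - {c ! a})))"
  proof (intro allI impI)
    fix S assume S: "S \<subseteq> tails_in_B0" "S \<noteq> {}"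
    show "\<exists>a\<in>S. \<forall>b\<in>S. b \<noteq> a \<longrightarrow> \<not> I1 (insert (c ! ((b + 1) mod length c)) (B0 - {c ! a}))"
    proof (rule exists_sink_min_key[where key = chord_key])
      show "finite S" by (rule finite_subset[OF S(1)]) (simp add: tails_in_B0_def)
      fix a b assume ab: "a \<in> S" "b \<in> S" "b \<noteq> a"
        "I1 (insert (c ! ((b + 1) mod length c)) (B0 - {c ! a}))"
      then have pos: "a < length c" "c ! a \<in> B0" "b < length c" "c ! b \<in> B0"
        using S unfolding tails_in_B0_def by auto
      then have "(b + 1) mod length c \<noteq> a" using arc_out_of_B0[of b] by auto
      then show "chord_key b < chord_key a"
        using chord_key_less chord_arc_M1 pos ab by simp
    qed (use S in simp)
  qed
qed

lemma exchange_ordered_M2: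
  "exchange_ordered I2 B0 (\<lambda>p. c ! ((p + 1) mod length c)) ((!) c) tails_out_B0"
  unfolding exchange_ordered_def
proof (intro conjI)
  show "finite tails_out_B0" unfolding tails_out_B0_def by simp
  show "inj_on (\<lambda>p. c ! ((p + 1) mod length c)) tails_out_B0" "inj_on ((!) c) tails_out_B0"
    using nth_c_inj next_c_inj unfolding tails_out_B0_def by (auto intro: inj_onI)
  show "(\<lambda>p. c ! ((p + 1) mod length c)) ` tails_out_B0 \<subseteq> B0" "(!) c ` tails_out_B0 \<inter> B0 = {}"
    using image_tails_out_B0 by auto
  show "\<forall>a\<in>tails_out_B0. I2 (insert (c ! a) (B0 - {c ! ((a + 1) mod length c)}))"
    using arc_into_B0 basis_indep unfolding tails_out_B0_def by blast
  show "\<forall>S\<subseteq>tails_out_B0. S \<noteq> {} \<longrightarrow> (\<exists>a\<in>S. \<forall>b\<in>S. b \<noteq> a \<longrightarrow>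
      \<not> I2 (insert (c ! b) (B0 - {c ! ((a + 1) mod length c)})))"
  proof (intro allI impI)
    fix S assume S: "S \<subseteq> tails_out_B0" "S \<noteq> {}"
    show "\<exists>a\<in>S. \<forall>b\<in>S. b \<noteq> a \<longrightarrow> \<not> I2 (insert (c ! b) (B0 - {c ! ((a + 1) mod length c)}))"
    proof (rule exists_sink_max_key[where key = chord_key])
      show "finite S" by (rule finite_subset[OF S(1)]) (simp add: tails_out_B0_def)
      fix a b assume ab: "a \<in> S" "b \<in> S" "b \<noteq> a"
        "I2 (insert (c ! b) (B0 - {c ! ((a + 1) mod length c)}))"
      then have pos: "a < length c" "c ! a \<notin> B0" "b < length c" "c ! b \<notin> B0"
        using S unfolding tails_out_B0_def by auto
      then have "(a + 1) mod length c \<noteq> b" using arc_into_B0[of a] by auto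
      then show "chord_key a < chord_key b"
        using chord_key_less chord_arc_M2 pos ab by simp
    qed (use S in simp)
  qed
qed

lemma common_basis_symdiff: "common_basis I1 I2 (B0 - set c \<union> (set c - B0))"
proof -
  have "I1 (B0 - set c \<union> (set c - B0))"
    using M1.indep_exchange_ordered[OF exchange_ordered_M1 basis_indep[OF basis_B0(1)]]
    unfolding image_tails_in_B0 by (simp add: Diff_Int)
  moreover have "I2 (B0 - set c \<union> (set c - B0))"
    using M2.indep_exchange_ordered[OF exchange_ordered_M2 basis_indep[OF basis_B0(2)]]
    unfolding image_tails_out_B0 by (simp add: Diff_Int)
  moreover have "card (B0 - set c \<union> (set c - B0)) = card B0"
  proof -
    have "card (set c \<inter> B0) = card (set c - B0)"
      using card_image exchange_ordered_M1 image_tails_in_B0 unfolding exchange_ordered_def by metis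
    moreover have "card (B0 - set c) = card B0 - card (set c \<inter> B0)"
      using finite_B0 by (metis Int_commute card_Diff_subset_Int finite_Int)
    moreover have "card (set c \<inter> B0) \<le> card B0" using finite_B0 by (simp add: card_mono)
    moreover have "card (B0 - set c \<union> (set c - B0)) = card (B0 - set c) + card (set c - B0)"
      using finite_B0 by (intro card_Un_disjoint) auto
    ultimately show ?thesis by linarith
  qed
  ultimately show ?thesis
    unfolding common_basis_def using M1.basis_if_card_eq M2.basis_if_card_eq basis_B0 by blast
qed

theorem no_shortest_negative_cycle: False
  using min_weight common_basis_symdiff negative
    sum_symdiff_eq_cycle_val[OF finite_B0 distinct_c, of w] by fastforce

end

lemma (in min_weight_common_basis) dicycle_weight_nonneg:
  assumes "dicycle E I1 I2 B0 c"
  shows "0 \<le> cycle_val B0 w c"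
proof (rule ccontr)
  assume "\<not> ?thesis"
  then have "\<exists>c. dicycle E I1 I2 B0 c \<and> cycle_val B0 w c < 0" using assms by auto
  then obtain c0 where c0: "dicycle E I1 I2 B0 c0" "cycle_val B0 w c0 < 0"
    and shortest: "\<And>c. dicycle E I1 I2 B0 c \<Longrightarrow> cycle_val B0 w c < 0 \<Longrightarrow> length c0 \<le> length c"
    using ex_has_least_nat[of "\<lambda>c. dicycle E I1 I2 B0 c \<and> cycle_val B0 w c < 0" _ length] by blast
  interpret shortest_negative_cycle E I1 I2 B0 w c0
    using c0 shortest by unfold_locales auto
  show False by (rule no_shortest_negative_cycle)
qed

section \<open>Decomposing the exchange to another common basis into cycles\<close>

lemma sum_orbits:
  assumes "p permutes S" "finite S"
  shows "sum f S = (\<Sum>Q\<in>orbit p ` S. sum f Q)"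
proof -
  have perm: "permutation p" using assms permutation_permutes by blast
  have "S = \<Union>(orbit p ` S)"
    using permutes_orbit_subset[OF assms(1)] permutation_self_in_orbit[OF perm] by blast
  moreover have "orbit p x = orbit p y" if "z \<in> orbit p x" "z \<in> orbit p y" for x y z
    using orbit_cyclic_eq3[OF cyclic_on_orbit'[OF perm]] that by metis
  then have "\<forall>Q\<in>orbit p ` S. \<forall>Q'\<in>orbit p ` S. Q \<noteq> Q' \<longrightarrow> Q \<inter> Q' = {}" by blast
  moreover have "\<forall>Q\<in>orbit p ` S. finite Q"
    using permutes_orbit_subset[OF assms(1)] assms(2) finite_subset by blast
  ultimately show ?thesis using sum.Union_disjoint[of "orbit p ` S" f] by simp
qed

locale exchange_decomposition = min_weight_common_basis +
  fixes B :: "'a set" and h1 h2 :: "'a \<Rightarrow> 'a"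
  assumes B_subset_ground: "B \<subseteq> E" and finite_B: "finite B"
    and h1: "bij_betw h1 (B - B0) (B0 - B)" "\<forall>y\<in>B - B0. basis I1 (insert y (B0 - {h1 y}))"
    and h2: "bij_betw h2 (B - B0) (B0 - B)" "\<forall>y\<in>B - B0. basis I2 (insert y (B0 - {h2 y}))"
begin

text \<open>Each \<open>y \<in> B - B0\<close> has the arcs \<open>y \<rightarrow> h2 y \<rightarrow> \<sigma> y\<close> in \<open>D(B0)\<close>, so the orbits of the
  permutation \<open>\<sigma>\<close> of \<open>B - B0\<close> trace directed cycles covering \<open>B \<triangle> B0\<close>.\<close>
definition \<sigma> :: "'a \<Rightarrow> 'a" where
  "\<sigma> y = (if y \<in> B - B0 then inv_into (B - B0) h1 (h2 y) else y)"

lemma bij_betw_\<sigma>: "bij_betw \<sigma> (B - B0) (B - B0)"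
proof -
  have "bij_betw (inv_into (B - B0) h1 \<circ> h2) (B - B0) (B - B0)"
    using bij_betw_trans[OF h2(1) bij_betw_inv_into[OF h1(1)]] by simp
  then show ?thesis by (rule bij_betw_cong[THEN iffD1, rotated]) (simp add: \<sigma>_def)
qed

lemma \<sigma>_permutes: "\<sigma> permutes (B - B0)"
  using bij_betw_\<sigma> by (rule bij_imp_permutes) (auto simp: \<sigma>_def)

lemma permutation_\<sigma>: "permutation \<sigma>"
  using \<sigma>_permutes finite_B unfolding permutation_permutes by blast

lemma \<sigma>_in: "y \<in> B - B0 \<Longrightarrow> \<sigma> y \<in> B - B0"
  using bij_betw_\<sigma> by (meson bij_betwE)

lemma funpow_\<sigma>_in:
  assumes "y \<in> B - B0"
  shows "(\<sigma> ^^ i) y \<in> B - B0"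
proof (induction i)
  case (Suc i)
  then show ?case using \<sigma>_in[OF Suc.IH] by simp
qed (use assms in simp)

lemma h1_\<sigma>:
  assumes "y \<in> B - B0"
  shows "h1 (\<sigma> y) = h2 y"
proof -
  have "h2 y \<in> h1 ` (B - B0)" using h1(1) h2(1) assms by (metis bij_betw_imp_surj_on bij_betwE)
  then show ?thesis using assms by (simp add: \<sigma>_def f_inv_into_f)
qed

lemma h2_in: "y \<in> B - B0 \<Longrightarrow> h2 y \<in> B0"
  using h2(1) by (auto dest: bij_betwE)

lemma inj_on_h2: "inj_on h2 (B - B0)"
  using h2(1) by (simp add: bij_betw_def)

definition orbit_length :: "'a \<Rightarrow> nat" where
  "orbit_length y = funpow_dist1 \<sigma> y y"

definition orbit_cycle :: "'a \<Rightarrow> 'a list" where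
  "orbit_cycle y = map (\<lambda>j. if even j then (\<sigma> ^^ (j div 2)) y else h2 ((\<sigma> ^^ (j div 2)) y))
     [0..<2 * orbit_length y]"

lemma self_in_orbit_\<sigma>: "y \<in> orbit \<sigma> y"
  using permutation_\<sigma> by (rule permutation_self_in_orbit)

lemma orbit_\<sigma>_eq: "orbit \<sigma> y = (\<lambda>i. (\<sigma> ^^ i) y) ` {0..<orbit_length y}"
  unfolding orbit_length_def by (rule orbit_conv_funpow_dist1[OF self_in_orbit_\<sigma>])

lemma inj_on_funpow_\<sigma>: "inj_on (\<lambda>i. (\<sigma> ^^ i) y) {0..<orbit_length y}"
  unfolding orbit_length_def by (rule inj_on_funpow_dist1[OF self_in_orbit_\<sigma>])

lemma funpow_orbit_length: "(\<sigma> ^^ orbit_length y) y = y"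
  unfolding orbit_length_def by (rule funpow_dist1_prop[OF self_in_orbit_\<sigma>])

lemma orbit_\<sigma>_subset: "y \<in> B - B0 \<Longrightarrow> orbit \<sigma> y \<subseteq> B - B0"
  using orbit_\<sigma>_eq funpow_\<sigma>_in by auto

lemma length_orbit_cycle: "length (orbit_cycle y) = 2 * orbit_length y"
  unfolding orbit_cycle_def by simp

lemma nth_orbit_cycle:
  "j < 2 * orbit_length y \<Longrightarrow>
    orbit_cycle y ! j = (if even j then (\<sigma> ^^ (j div 2)) y else h2 ((\<sigma> ^^ (j div 2)) y))"
  unfolding orbit_cycle_def by simp

lemma set_orbit_cycle: "set (orbit_cycle y) = orbit \<sigma> y \<union> h2 ` orbit \<sigma> y"
proof
  show "set (orbit_cycle y) \<subseteq> orbit \<sigma> y \<union> h2 ` orbit \<sigma> y"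
  proof
    fix v assume "v \<in> set (orbit_cycle y)"
    then obtain j where j: "j < 2 * orbit_length y" "v = orbit_cycle y ! j"
      by (auto simp: in_set_conv_nth length_orbit_cycle)
    then have "(\<sigma> ^^ (j div 2)) y \<in> orbit \<sigma> y" using orbit_\<sigma>_eq by auto
    then show "v \<in> orbit \<sigma> y \<union> h2 ` orbit \<sigma> y" using j nth_orbit_cycle by auto
  qed
  show "orbit \<sigma> y \<union> h2 ` orbit \<sigma> y \<subseteq> set (orbit_cycle y)"
  proof
    fix v assume "v \<in> orbit \<sigma> y \<union> h2 ` orbit \<sigma> y"
    then obtain i where i: "i < orbit_length y" "v = (\<sigma> ^^ i) y \<or> v = h2 ((\<sigma> ^^ i) y)"
      using orbit_\<sigma>_eq by auto
    then have "orbit_cycle y ! (2 * i) = v \<or> orbit_cycle y ! (2 * i + 1) = v"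
      using nth_orbit_cycle[of "2 * i" y] nth_orbit_cycle[of "2 * i + 1" y] by auto
    moreover have "2 * i < length (orbit_cycle y)" "2 * i + 1 < length (orbit_cycle y)"
      using i length_orbit_cycle[of y] by auto
    ultimately show "v \<in> set (orbit_cycle y)" by (metis nth_mem)
  qed
qed

lemma distinct_orbit_cycle:
  assumes y: "y \<in> B - B0"
  shows "distinct (orbit_cycle y)"
proof (subst distinct_conv_nth, intro allI impI)
  fix i j assume ij: "i < length (orbit_cycle y)" "j < length (orbit_cycle y)" "i \<noteq> j"
  have lt: "i div 2 < orbit_length y" "j div 2 < orbit_length y"
    using ij length_orbit_cycle by auto
  have in_diff: "(\<sigma> ^^ k) y \<in> B - B0" for k using funpow_\<sigma>_in y by simp
  have neq: "(\<sigma> ^^ (i div 2)) y \<noteq> (\<sigma> ^^ (j div 2)) y" if "i div 2 \<noteq> j div 2"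
    using inj_on_funpow_\<sigma>[of y] lt that by (auto dest: inj_onD)
  show "orbit_cycle y ! i \<noteq> orbit_cycle y ! j"
  proof (cases "even i"; cases "even j")
    assume "even i" "even j"
    then show ?thesis using neq ij nth_orbit_cycle length_orbit_cycle by (auto elim!: evenE)
  next
    assume "odd i" "odd j"
    then have "i div 2 \<noteq> j div 2" using ij(3) by (metis odd_two_times_div_two_succ)
    then have "h2 ((\<sigma> ^^ (i div 2)) y) \<noteq> h2 ((\<sigma> ^^ (j div 2)) y)"
      using neq inj_on_h2 in_diff by (metis inj_onD)
    then show ?thesis using ij nth_orbit_cycle length_orbit_cycle \<open>odd i\<close> \<open>odd j\<close> by simp
  next
    assume "even i" "odd j"
    have "(\<sigma> ^^ (i div 2)) y \<notin> B0" "h2 ((\<sigma> ^^ (j div 2)) y) \<in> B0"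
      using in_diff h2_in by auto
    then show ?thesis using nth_orbit_cycle ij length_orbit_cycle \<open>even i\<close> \<open>odd j\<close> by auto
  next
    assume "odd i" "even j"
    have "(\<sigma> ^^ (j div 2)) y \<notin> B0" "h2 ((\<sigma> ^^ (i div 2)) y) \<in> B0"
      using in_diff h2_in by auto
    then show ?thesis using nth_orbit_cycle ij length_orbit_cycle \<open>odd i\<close> \<open>even j\<close> by auto
  qed
qed

lemma dicycle_orbit_cycle:
  assumes y: "y \<in> B - B0"
  shows "dicycle E I1 I2 B0 (orbit_cycle y)"
  unfolding dicycle_def
proof (intro conjI allI impI distinct_orbit_cycle[OF y])
  define M where "M = orbit_length y"
  have M_pos: "0 < M" unfolding M_def orbit_length_def by simp
  show "2 \<le> length (orbit_cycle y)" using length_orbit_cycle M_pos M_def by simp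
  fix j assume j: "j < length (orbit_cycle y)"
  define z where "z = (\<sigma> ^^ (j div 2)) y"
  have z: "z \<in> B - B0" using funpow_\<sigma>_in y z_def by simp
  show "exch_arc E I1 I2 B0 (orbit_cycle y ! j) (orbit_cycle y ! ((j + 1) mod length (orbit_cycle y)))"
  proof (cases "even j")
    case True
    then have "j + 1 < 2 * M" using j length_orbit_cycle[of y] M_def by presburger
    moreover have "exch_arc E I1 I2 B0 z (h2 z)"
      unfolding exch_arc_def using z h2_in h2(2) B_subset_ground by auto
    ultimately show ?thesis
      using True j nth_orbit_cycle[of j y] nth_orbit_cycle[of "j + 1" y] length_orbit_cycle
      unfolding z_def M_def by simp
  next
    case False
    have next_is_\<sigma>: "orbit_cycle y ! ((j + 1) mod length (orbit_cycle y)) = \<sigma> z"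
    proof (cases "j + 1 < 2 * M")
      case True
      moreover have "(j + 1) div 2 = j div 2 + 1" using False by presburger
      ultimately show ?thesis using nth_orbit_cycle[of "j + 1"] False length_orbit_cycle
        unfolding z_def M_def by (simp add: funpow_swap1)
    next
      case False
      then have "j + 1 = 2 * M" and "j div 2 + 1 = M"
        using j length_orbit_cycle M_def \<open>odd j\<close> by auto
      moreover have "\<sigma> z = y"
        using \<open>j div 2 + 1 = M\<close> funpow_orbit_length[of y] unfolding z_def M_def
        by (metis Suc_eq_plus1 comp_apply funpow.simps(2))
      ultimately show ?thesis using nth_orbit_cycle[of 0] M_pos length_orbit_cycle unfolding M_def by simp
    qed
    have "basis I1 (insert (\<sigma> z) (B0 - {h2 z}))" using h1(2) \<sigma>_in[OF z] h1_\<sigma>[OF z] by metis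
    then have "exch_arc E I1 I2 B0 (h2 z) (\<sigma> z)"
      unfolding exch_arc_def using z \<sigma>_in[OF z] h2_in B_subset_ground by auto
    then show ?thesis using nth_orbit_cycle j length_orbit_cycle False next_is_\<sigma> z_def by simp
  qed
qed

lemma cycle_val_orbit_cycle:
  assumes y: "y \<in> B - B0"
  shows "cycle_val B0 f (orbit_cycle y) = (\<Sum>x\<in>orbit \<sigma> y. f x - f (h2 x))"
proof -
  have sub: "orbit \<sigma> y \<subseteq> B - B0" using orbit_\<sigma>_subset y by simp
  have fin: "finite (orbit \<sigma> y)" using sub finite_B finite_subset by blast
  have "cycle_val B0 f (orbit_cycle y) = (\<Sum>v\<in>orbit \<sigma> y \<union> h2 ` orbit \<sigma> y. arc_val B0 f v v)"
    using cycle_val_eq_sum_set[OF distinct_orbit_cycle[OF y]] set_orbit_cycle by simp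
  also have "\<dots> = (\<Sum>v\<in>orbit \<sigma> y. arc_val B0 f v v) + (\<Sum>v\<in>h2 ` orbit \<sigma> y. arc_val B0 f v v)"
    using fin sub h2_in by (intro sum.union_disjoint) auto
  also have "(\<Sum>v\<in>orbit \<sigma> y. arc_val B0 f v v) = (\<Sum>v\<in>orbit \<sigma> y. f v)"
    using sub unfolding arc_val_def by (intro sum.cong) auto
  also have "(\<Sum>v\<in>h2 ` orbit \<sigma> y. arc_val B0 f v v) = (\<Sum>v\<in>orbit \<sigma> y. arc_val B0 f (h2 v) (h2 v))"
    using sum.reindex[OF inj_on_subset[OF inj_on_h2 sub], of "\<lambda>v. arc_val B0 f v v"] by simp
  also have "\<dots> = (\<Sum>v\<in>orbit \<sigma> y. - f (h2 v))"
    using sub h2_in by (intro sum.cong) (auto simp: arc_val_def)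
  finally show ?thesis by (simp add: sum_subtractf sum_negf)
qed

lemma sum_exchange_diff:
  fixes f :: "'a \<Rightarrow> 'g::ab_group_add"
  shows "(\<Sum>y\<in>B - B0. f y - f (h2 y)) = sum f B - sum f B0"
proof -
  have "(\<Sum>y\<in>B - B0. f y - f (h2 y)) = sum f (B - B0) - (\<Sum>y\<in>B - B0. f (h2 y))"
    by (rule sum_subtractf)
  also have "(\<Sum>y\<in>B - B0. f (h2 y)) = sum f (B0 - B)"
    by (rule sum.reindex_bij_betw[OF h2(1)])
  finally have "(\<Sum>y\<in>B - B0. f y - f (h2 y)) = sum f (B - B0) - sum f (B0 - B)" .
  moreover have "sum f B = sum f (B \<inter> B0) + sum f (B - B0)" using finite_B by (rule sum.Int_Diff)
  moreover have "sum f B0 = sum f (B0 \<inter> B) + sum f (B0 - B)" using finite_B0 by (rule sum.Int_Diff)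
  ultimately show ?thesis by (simp add: Int_commute)
qed

text \<open>Every orbit cycle is non-negative, so one whose label is nonzero weighs at most all of them.\<close>
lemma exists_labelled_cycle_below:
  assumes "(\<Sum>y\<in>B - B0. \<psi> y - \<psi> (h2 y)) \<noteq> 0"
  shows "\<exists>cs. dicycle E I1 I2 B0 cs \<and> cycle_val B0 \<psi> cs \<noteq> 0 \<and>
    cycle_val B0 w cs \<le> (\<Sum>y\<in>B - B0. w y - w (h2 y))"
proof -
  have fin: "finite (B - B0)" using finite_B by simp
  have "(\<Sum>Q\<in>orbit \<sigma> ` (B - B0). \<Sum>y\<in>Q. \<psi> y - \<psi> (h2 y)) \<noteq> 0"
    using assms sum_orbits[OF \<sigma>_permutes fin] by metis
  then obtain y0 where y0: "y0 \<in> B - B0" "(\<Sum>y\<in>orbit \<sigma> y0. \<psi> y - \<psi> (h2 y)) \<noteq> 0"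
    by (metis (no_types, lifting) imageE sum.neutral)
  have "cycle_val B0 w (orbit_cycle y0) = (\<Sum>y\<in>orbit \<sigma> y0. w y - w (h2 y))"
    using cycle_val_orbit_cycle[OF y0(1)] .
  also have "\<dots> \<le> (\<Sum>Q\<in>orbit \<sigma> ` (B - B0). \<Sum>y\<in>Q. w y - w (h2 y))"
  proof (rule member_le_sum)
    show "orbit \<sigma> y0 \<in> orbit \<sigma> ` (B - B0)" using y0 by blast
    show "0 \<le> (\<Sum>y\<in>Q. w y - w (h2 y))" if Q: "Q \<in> orbit \<sigma> ` (B - B0) - {orbit \<sigma> y0}" for Q
    proof -
      obtain x where x: "x \<in> B - B0" "Q = orbit \<sigma> x" using Q by blast
      show ?thesis
        using dicycle_weight_nonneg[OF dicycle_orbit_cycle[OF x(1)]] cycle_val_orbit_cycle[OF x(1), of w] x(2)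
        by simp
    qed
  qed (use fin in simp)
  also have "\<dots> = (\<Sum>y\<in>B - B0. w y - w (h2 y))"
    using sum_orbits[OF \<sigma>_permutes fin] by metis
  finally show ?thesis
    using dicycle_orbit_cycle[OF y0(1)] cycle_val_orbit_cycle[OF y0(1)] y0(2) by metis
qed

end

theorem lemma3p9:
  fixes E :: "'a set" and I1 I2 :: "'a set \<Rightarrow> bool"
    and \<psi> :: "'a \<Rightarrow> 'g::ab_group_add" and w :: "'a \<Rightarrow> real"
    and B0 Bstar :: "'a set" and C :: "'a list"
  assumes "matroid E I1" and "matroid E I2"
    and "common_basis I1 I2 B0"
    and "\<forall>B. common_basis I1 I2 B \<longrightarrow> sum w B0 \<le> sum w B"
    and "sum \<psi> B0 = 0"
    and "dicycle E I1 I2 B0 C" and "cycle_val B0 \<psi> C \<noteq> 0"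
    and "\<forall>C'. dicycle E I1 I2 B0 C' \<and> cycle_val B0 \<psi> C' \<noteq> 0
              \<longrightarrow> cycle_val B0 w C \<le> cycle_val B0 w C'"
    and "common_basis I1 I2 Bstar" and "sum \<psi> Bstar \<noteq> 0"
  shows "sum w (B0 - set C \<union> (set C - B0)) \<le> sum w Bstar"
proof -
  interpret min_weight_common_basis E I1 I2 B0 w
    using assms(1-4) by unfold_locales
  have Bstar: "basis I1 Bstar" "basis I2 Bstar" using assms(9) unfolding common_basis_def by auto
  obtain h1 h2 where
    "bij_betw h1 (Bstar - B0) (B0 - Bstar)" "\<forall>y\<in>Bstar - B0. basis I1 (insert y (B0 - {h1 y}))"
    "bij_betw h2 (Bstar - B0) (B0 - Bstar)" "\<forall>y\<in>Bstar - B0. basis I2 (insert y (B0 - {h2 y}))"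
    using M1.basis_exchange_bijection[OF basis_B0(1) Bstar(1)]
      M2.basis_exchange_bijection[OF basis_B0(2) Bstar(2)] by blast
  moreover have "Bstar \<subseteq> E" "finite Bstar"
    using Bstar M1.indep_subset_ground M1.basis_finite basis_indep by auto
  ultimately interpret exchange_decomposition E I1 I2 B0 w Bstar h1 h2
    by unfold_locales
  have "(\<Sum>y\<in>Bstar - B0. \<psi> y - \<psi> (h2 y)) \<noteq> 0"
    using sum_exchange_diff[of \<psi>] assms(5,10) by simp
  then obtain cs where "dicycle E I1 I2 B0 cs" "cycle_val B0 \<psi> cs \<noteq> 0"
    "cycle_val B0 w cs \<le> sum w Bstar - sum w B0"
    using exists_labelled_cycle_below sum_exchange_diff[of w] by metis
  then have "cycle_val B0 w C \<le> sum w Bstar - sum w B0" using assms(8) by fastforce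
  moreover have "distinct C" using assms(6) unfolding dicycle_def by simp
  ultimately show ?thesis using sum_symdiff_eq_cycle_val[OF finite_B0, of C w] by simp
qed

end
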